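(* Let $n$ and $0<n_1<\cdots<n_d<n$ be integers with $m_1=n_1$, $m_k=n_k-n_{k-1}$ ($2\le k\le d$), $m_{d+1}=n-n_d$, and regard $\mathrm{Flag}(n_1,\dots,n_d;n)=\{(VJ_1V^{\mathsf T},\dots,VJ_{d+1}V^{\mathsf T}):V\in\mathrm{O}(n)\}$ as a submanifold of $(\mathbb{R}^{n\times n})^{d+1}$ with the Frobenius inner product. Let $V(t)$ be a differentiable curve in $\mathrm{O}(n)$, $\Lambda(t)=V(t)^{\mathsf T}\dot V(t)$, with $\Lambda(k,k)(t)\equiv0$ for $k=1,\dots,d+1$, and $c(t)=V(t)(J_1,\dots,J_{d+1})V(t)^{\mathsf T}$. Define \begin{align*} T_1(t)&=V(t)\big(\dot\Lambda J_1-J_1\dot\Lambda,\dots,\dot\Lambda J_{d+1}-J_{d+1}\dot\Lambda\big)V(t)^{\mathsf T},\\ T_2(t)&=V(t)\big(\Lambda^2J_1+J_1\Lambda^2,\dots,\Lambda^2J_{d+1}+J_{d+1}\Lambda^2\big)V(t)^{\mathsf T},\\ T_3(t)&=V(t)\big(\Lambda J_1\Lambda,\dots,\Lambda J_{d+1}\Lambda\big)V(t)^{\mathsf T}, \end{align*} with $\Lambda=\Lambda(t)$. Then (1) $T_1(t)\in\mathbb{T}_{c(t)}\mathrm{Flag}(n_1,\dots,n_d;n)$; (2) the orthogonal projection of $T_2(t)$ onto $\mathbb{T}_{c(t)}\mathrm{Flag}(n_1,\dots,n_d;n)$ is zero; (3) the orthogonal projection of $T_3(t)$ onto $\mathbb{T}_{c(t)}\mathrm{Flag}(n_1,\dots,n_d;n)$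 is zero.
   Context: $J_k=\operatorname{diag}(-I_{m_1},\dots,-I_{m_{k-1}},I_{m_k},-I_{m_{k+1}},\dots,-I_{m_{d+1}})$ for $k=1,\dots,d+1$. $V(X_1,\dots,X_{d+1})V^{\mathsf T}$ denotes $(VX_1V^{\mathsf T},\dots,VX_{d+1}V^{\mathsf T})$. For an $n\times n$ matrix $M$, $M(p,q)$ denotes its $(p,q)$ block in the partition $n=m_1+\cdots+m_{d+1}$. *)

theory Defs
  imports "HOL-Analysis.Analysis"
begin

text \<open>Indices of an n x n matrix range over a finite linearly ordered type 'n with
  CARD('n) = n; the 0-based position of an index in this order is idx_pos.\<close>
definition idx_pos :: "'a::{finite,linorder} \<Rightarrow> nat" where
  "idx_pos i = card {j. j < i}"

definition bnd :: "nat \<Rightarrow> (nat \<Rightarrow> nat) \<Rightarrow> nat \<Rightarrow> nat \<Rightarrow> nat" where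
  "bnd n ns d k = (if k = 0 then 0 else if k \<le> d then ns k else n)"

text \<open>Index i lies in block k (1-based) of the partition n = m_1 + ... + m_(d+1).\<close>
definition in_block :: "(nat \<Rightarrow> nat) \<Rightarrow> nat \<Rightarrow> nat \<Rightarrow> 'n::{finite,linorder} \<Rightarrow> bool" where
  "in_block ns d k i \<longleftrightarrow>
     bnd CARD('n) ns d (k - 1) \<le> idx_pos i \<and> idx_pos i < bnd CARD('n) ns d k"

definition Jmat :: "(nat \<Rightarrow> nat) \<Rightarrow> nat \<Rightarrow> nat \<Rightarrow> real^('n::{finite,linorder})^('n::{finite,linorder})" where
  "Jmat ns d k = (\<chi> i j. if i = j then (if in_block ns d k i then 1 else -1) else 0)"

text \<open>(d+1)-tuples of matrices are indexed by a finite linear order 'k with CARD('k) = d+1;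
  its element at position p (0-based) is the (p+1)-th component. The type
  real^'n^'n^'k carries the Frobenius inner product (sum of entrywise products).\<close>
definition Jtup :: "(nat \<Rightarrow> nat) \<Rightarrow> nat \<Rightarrow> real^('n::{finite,linorder})^('n::{finite,linorder})^('k::{finite,linorder})" where
  "Jtup ns d = (\<chi> k. Jmat ns d (idx_pos k + 1))"

definition conj_tup :: "real^'n^'n \<Rightarrow> real^'n^'n^'k \<Rightarrow> real^'n^'n^'k" where
  "conj_tup V X = (\<chi> k. V ** (X $ k) ** transpose V)"

definition flag_manifold ::
  "(nat \<Rightarrow> nat) \<Rightarrow> nat \<Rightarrow> (real^('n::{finite,linorder})^('n::{finite,linorder})^('k::{finite,linorder})) set" where
  "flag_manifold ns d = {conj_tup V (Jtup ns d) | V. orthogonal_matrix V}"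

definition tangent_space :: "'a::real_normed_vector set \<Rightarrow> 'a \<Rightarrow> 'a set" where
  "tangent_space S x = {v. \<exists>\<gamma>. \<gamma> 0 = x \<and> (\<forall>t. \<gamma> t \<in> S) \<and> (\<gamma> has_vector_derivative v) (at 0)}"

definition orth_proj :: "'a::real_inner set \<Rightarrow> 'a \<Rightarrow> 'a" where
  "orth_proj T X = (THE p. p \<in> T \<and> (\<forall>u\<in>T. inner (X - p) u = 0))"

end

theory Submission
  imports Defs
begin

text \<open>A tangent vector \<open>u\<close> of the flag manifold at \<open>c = V J V\<^sup>T\<close> satisfies the linearised
  constraints \<open>c\<^sub>k u\<^sub>k + u\<^sub>k c\<^sub>k = 0\<close> (from \<open>c\<^sub>k\<^sup>2 = I\<close>) and \<open>\<Sum>\<^sub>k u\<^sub>k = 0\<close> (from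
  \<open>\<Sum>\<^sub>k c\<^sub>k = (1 - d) I\<close>); pulled back by \<open>V\<close>, each \<open>U\<^sub>k = V\<^sup>T u\<^sub>k V\<close> anticommutes with
  \<open>J\<^sub>k\<close> and the \<open>U\<^sub>k\<close> sum to zero. Anticommutation alone kills \<open>tr ((\<Lambda>\<^sup>2 J\<^sub>k + J\<^sub>k \<Lambda>\<^sup>2) U\<^sub>k)\<close>.
  Writing \<open>J\<^sub>k = 2 P\<^sub>k - I\<close> with the block projection \<open>P\<^sub>k\<close>, anticommutation means
  \<open>U\<^sub>k = P\<^sub>k U\<^sub>k + U\<^sub>k P\<^sub>k\<close>, so the vanishing diagonal blocks \<open>P\<^sub>k \<Lambda> P\<^sub>k = 0\<close> give
  \<open>tr (\<Lambda> J\<^sub>k \<Lambda> U\<^sub>k) = - tr (\<Lambda>\<^sup>2 U\<^sub>k)\<close>, which sums to zero over \<open>k\<close>. Hence \<open>T\<^sub>2\<close> and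
  \<open>T\<^sub>3\<close> are orthogonal to the tangent space. Finally \<open>T\<^sub>1\<close> is the velocity of
  \<open>s \<mapsto> V Q(s) J Q(s)\<^sup>T\<close> for the Cayley curve \<open>Q(s) = (I + s A/2)(I - s A/2)\<^sup>-\<^sup>1\<close> in
  \<open>O(n)\<close>, whose velocity at \<open>0\<close> is the skew matrix \<open>A = \<Lambda>'(t)\<close>.\<close>

lemma matrix_add_rdistrib: "((A::'a::semiring_1^'n^'m) + B) ** C = A ** C + B ** C"
  by (vector matrix_matrix_mult_def sum.distrib[symmetric] field_simps)

lemma matrix_diff_ldistrib: "(A::'a::ring_1^'n^'m) ** (B - C) = A ** B - A ** C"
  by (vector matrix_matrix_mult_def sum_subtractf[symmetric] field_simps)

lemma matrix_diff_rdistrib: "((A::'a::ring_1^'n^'m) - B) ** C = A ** C - B ** C"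
  by (vector matrix_matrix_mult_def sum_subtractf[symmetric] field_simps)

lemma matrix_neg_mult: "(- (A::'a::ring_1^'n^'m)) ** B = - (A ** B)"
  by (vector matrix_matrix_mult_def sum_negf[symmetric])

lemma matrix_mult_neg: "(A::'a::ring_1^'n^'m) ** (- B) = - (A ** B)"
  by (vector matrix_matrix_mult_def sum_negf[symmetric])

lemma matrix_mult_sum: "(A::'a::semiring_1^'n^'m) ** sum X S = (\<Sum>k\<in>S. A ** X k)"
  by (induction S rule: infinite_finite_induct) (simp_all add: matrix_add_ldistrib)

lemma matrix_sum_mult: "sum X S ** (B::'a::semiring_1^'p^'n) = (\<Sum>k\<in>S. X k ** B)"
  by (induction S rule: infinite_finite_induct) (simp_all add: matrix_add_rdistrib)

lemma transpose_add: "transpose (A + B) = transpose A + transpose (B::'a::plus^'n^'m)"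
  by (vector transpose_def)

lemma transpose_diff: "transpose (A - B) = transpose A - transpose (B::'a::minus^'n^'m)"
  by (vector transpose_def)

lemma bounded_bilinear_matrix_mult:
  "bounded_bilinear ((**) :: real^'n^'m \<Rightarrow> real^'p^'n \<Rightarrow> real^'p^'m)"
  unfolding bilinear_conv_bounded_bilinear[symmetric] bilinear_def
  by (auto intro!: linearI simp: matrix_add_ldistrib matrix_add_rdistrib
      scalar_matrix_assoc matrix_scalar_ac)

lemma bounded_linear_transpose: "bounded_linear (transpose :: real^'n^'m \<Rightarrow> real^'m^'n)"
  by (auto intro!: linearI simp: linear_conv_bounded_linear[symmetric] transpose_add transpose_scalar)

lemma mat_eq_scaleR: "(mat c :: real^'n^'n) = c *\<^sub>R mat 1"
  by (simp add: mat_def vec_eq_iff)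

lemma trace_sum: "trace (sum X S :: 'a::comm_semiring_1^'n^'n) = (\<Sum>k\<in>S. trace (X k))"
  by (induction S rule: infinite_finite_induct) (simp_all add: trace_add trace_0[simplified])

lemma trace_scaleR: "trace (c *\<^sub>R (A::real^'n^'n)) = c * trace A"
  by (simp add: trace_def sum_distrib_left)

lemma inner_matrix_eq_trace: "inner (X::real^'n^'m) Y = trace (transpose X ** Y)"
proof -
  have "trace (transpose X ** Y) = (\<Sum>i\<in>UNIV. \<Sum>k\<in>UNIV. X$k$i * Y$k$i)"
    by (simp add: trace_def matrix_matrix_mult_def transpose_def)
  also have "\<dots> = (\<Sum>k\<in>UNIV. \<Sum>i\<in>UNIV. X$k$i * Y$k$i)"
    by (rule sum.swap)
  finally show ?thesis
    by (simp add: inner_vec_def)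
qed

lemma inner_conj_matrix: "inner ((W::real^'n^'n) ** X ** transpose W) Y = inner X (transpose W ** Y ** W)"
proof -
  have "inner (W ** X ** transpose W) Y = trace (W ** (transpose X ** transpose W ** Y))"
    by (simp add: inner_matrix_eq_trace matrix_transpose_mul matrix_mul_assoc)
  also have "\<dots> = trace ((transpose X ** transpose W ** Y) ** W)"
    by (rule trace_mul_sym)
  finally show ?thesis
    by (simp add: inner_matrix_eq_trace matrix_mul_assoc)
qed

lemma inner_conj_tup_sum:
  "inner (conj_tup W X) u = (\<Sum>k\<in>UNIV. inner (X $ k) (conj_tup (transpose W) u $ k))"
  by (simp only: inner_vec_def[of "conj_tup W X"]) (simp add: conj_tup_def inner_conj_matrix)

lemma inner_skew_matrix_vector:
  assumes "transpose A = - A"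
  shows "inner x ((A::real^'n^'n) *v x) = 0"
proof -
  have "inner x (A *v x) = inner (transpose A *v x) x"
    by (simp add: dot_lmul_matrix[symmetric])
  also have "transpose A *v x = - (A *v x)"
    unfolding assms by (vector matrix_vector_mult_def sum_negf[symmetric])
  finally show ?thesis
    by (simp add: inner_commute[of x])
qed

lemma norm_orthogonal_matrix: "orthogonal_matrix (Q::real^'n^'n) \<Longrightarrow> norm Q = sqrt CARD('n)"
  by (simp add: norm_eq_sqrt_inner inner_matrix_eq_trace orthogonal_matrix_def trace_I)

lemma orth_proj_eq_0:
  assumes "0 \<in> T" "\<And>u. u \<in> T \<Longrightarrow> inner X u = 0"
  shows "orth_proj T X = 0"
  unfolding orth_proj_def
proof (rule the_equality)
  fix p assume p: "p \<in> T \<and> (\<forall>u\<in>T. inner (X - p) u = 0)"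
  then have "inner (X - p) p = 0" and "inner X p = 0"
    using assms by auto
  then have "inner p p = 0"
    by (simp add: inner_diff_left)
  then show "p = 0"
    by simp
qed (use assms in simp)

lemma has_vector_derivative_const_eq_0:
  assumes "(f has_vector_derivative f') (at x)" "\<And>s. f s = c"
  shows "f' = 0"
proof -
  have "f = (\<lambda>_. c)"
    using assms(2) by (rule ext)
  then show ?thesis
    using assms(1) vector_derivative_unique_at[of f f' x 0] by simp
qed

lemma has_vector_derivative_scaleR_at_0:
  fixes G :: "real \<Rightarrow> 'a::real_normed_vector"
  assumes "(G \<longlongrightarrow> G0) (at 0)"
  shows "((\<lambda>s. C + s *\<^sub>R G s) has_vector_derivative G0) (at 0)"
  unfolding has_vector_derivative_def has_derivative_iff_norm
proof
  show "bounded_linear (\<lambda>s. s *\<^sub>R G0)"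
    by (rule bounded_linear_scaleR_left)
  have "((\<lambda>h. norm (G h - G0)) \<longlongrightarrow> 0) (at 0)"
    using assms by (simp add: tendsto_norm_zero_iff LIM_zero_iff)
  moreover have "\<forall>\<^sub>F h in at 0. norm (G h - G0)
      = norm (C + h *\<^sub>R G h - (C + 0 *\<^sub>R G 0) - (h - 0) *\<^sub>R G0) / norm (h - 0)"
    by (auto simp: eventually_at_filter scaleR_diff_right[symmetric])
  ultimately show "((\<lambda>h. norm (C + h *\<^sub>R G h - (C + 0 *\<^sub>R G 0) - (h - 0) *\<^sub>R G0) / norm (h - 0))
      \<longlongrightarrow> 0) (at 0)"
    by (rule Lim_transform_eventually)
qed

lemma zero_in_tangent_space: "x \<in> S \<Longrightarrow> 0 \<in> tangent_space S x"
  unfolding tangent_space_def by (intro CollectI exI[of _ "\<lambda>_. x"]) simp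

lemma skew_velocity_of_orthogonal_curve:
  fixes V :: "real \<Rightarrow> real^'n^'n"
  assumes "\<And>s. orthogonal_matrix (V s)" "(V has_vector_derivative V') (at s)"
  shows "transpose (transpose (V s) ** V') = - (transpose (V s) ** V')"
proof -
  have "((\<lambda>r. transpose (V r)) has_vector_derivative transpose V') (at s)"
    by (rule bounded_linear.has_vector_derivative[OF bounded_linear_transpose assms(2)])
  from bounded_bilinear.has_vector_derivative[OF bounded_bilinear_matrix_mult this assms(2)]
  have "transpose (V s) ** V' + transpose V' ** V s = 0"
    by (rule has_vector_derivative_const_eq_0) (use assms(1) in \<open>simp add: orthogonal_matrix_def\<close>)
  then show ?thesis
    by (simp add: matrix_transpose_mul add_eq_0_iff)
qed

lemma skew_derivative_of_skew_curve:
  fixes L :: "real \<Rightarrow> real^'n^'n"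
  assumes "\<And>r. transpose (L r) = - L r" "(L has_vector_derivative L') (at s)"
  shows "transpose L' = - L'"
proof -
  have "((\<lambda>r. transpose (L r)) has_vector_derivative transpose L') (at s)"
    by (rule bounded_linear.has_vector_derivative[OF bounded_linear_transpose assms(2)])
  moreover have "((\<lambda>r. transpose (L r)) has_vector_derivative - L') (at s)"
    using assms(1) has_vector_derivative_minus[OF assms(2)] by simp
  ultimately show ?thesis
    by (rule vector_derivative_unique_at)
qed

section \<open>The Cayley transform\<close>

definition cayley :: "real^'n^'n \<Rightarrow> real^'n^'n" where
  "cayley A = (mat 1 + A) ** matrix_inv (mat 1 - A)"

lemma matrix_inv_mult:
  assumes "invertible A"
  shows "A ** matrix_inv A = mat 1" and "matrix_inv A ** A = mat 1"
  using someI_ex[OF assms[unfolded invertible_def]] unfolding matrix_inv_def by auto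

lemma invertible_id_minus_skew:
  assumes "transpose A = - A"
  shows "invertible (mat 1 - (A::real^'n^'n))"
proof -
  have "x = 0" if "(mat 1 - A) *v x = 0" for x
  proof -
    have "x = A *v x"
      using that by (simp add: matrix_vector_mult_diff_rdistrib)
    then have "inner x x = 0"
      by (metis inner_skew_matrix_vector[OF assms])
    then show "x = 0"
      by simp
  qed
  then show ?thesis
    using matrix_left_invertible_ker invertible_left_inverse by blast
qed

lemma
  assumes "transpose A = - A"
  shows cayley_eq: "cayley A = mat 1 + 2 *\<^sub>R (A ** matrix_inv (mat 1 - A))"
    and matrix_inv_id_minus_eq: "matrix_inv (mat 1 - A) = mat 1 + A ** matrix_inv (mat 1 - A)"
proof -
  have "(mat 1 - A) ** matrix_inv (mat 1 - A) = mat 1"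
    by (rule matrix_inv_mult(1)[OF invertible_id_minus_skew[OF assms]])
  then show inv: "matrix_inv (mat 1 - A) = mat 1 + A ** matrix_inv (mat 1 - A)"
    by (simp add: matrix_diff_rdistrib algebra_simps)
  have "cayley A = matrix_inv (mat 1 - A) + A ** matrix_inv (mat 1 - A)"
    by (simp add: cayley_def matrix_add_rdistrib)
  also have "\<dots> = mat 1 + 2 *\<^sub>R (A ** matrix_inv (mat 1 - A))"
    by (subst inv) (simp add: scaleR_2 add.assoc)
  finally show "cayley A = mat 1 + 2 *\<^sub>R (A ** matrix_inv (mat 1 - A))" .
qed

lemma orthogonal_matrix_cayley:
  assumes "transpose A = - A"
  shows "orthogonal_matrix (cayley A)"
proof -
  define M where "M = matrix_inv (mat 1 - A)"
  have NM: "(mat 1 - A) ** M = mat 1"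
    unfolding M_def by (rule matrix_inv_mult(1)[OF invertible_id_minus_skew[OF assms]])
  have comm: "(mat 1 - A) ** (mat 1 + A) = (mat 1 + A) ** (mat 1 - A)"
    by (simp add: matrix_add_ldistrib matrix_add_rdistrib matrix_diff_ldistrib matrix_diff_rdistrib)
  have "transpose (cayley A) ** cayley A = transpose M ** ((mat 1 - A) ** (mat 1 + A)) ** M"
    by (simp add: cayley_def M_def matrix_transpose_mul transpose_add assms matrix_mul_assoc)
  also have "\<dots> = transpose M ** (mat 1 + A)"
    unfolding comm by (simp add: matrix_mul_assoc[symmetric] NM)
  also have "\<dots> = transpose ((mat 1 - A) ** M)"
    by (simp add: matrix_transpose_mul transpose_diff assms)
  finally show ?thesis
    by (simp add: NM orthogonal_matrix)
qed

lemma norm_matrix_inv_id_minus_skew: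
  fixes A :: "real^'n^'n"
  assumes "transpose A = - A"
  shows "norm (matrix_inv (mat 1 - A)) \<le> sqrt CARD('n)"
proof -
  have "mat 1 + cayley A = 2 *\<^sub>R matrix_inv (mat 1 - A)"
    by (subst matrix_inv_id_minus_eq[OF assms]) (simp add: cayley_eq[OF assms] algebra_simps scaleR_2)
  then have "matrix_inv (mat 1 - A) = (1 / 2) *\<^sub>R (mat 1 + cayley A)"
    by simp
  then have "norm (matrix_inv (mat 1 - A)) \<le> (1 / 2) * (norm (mat 1 :: real^'n^'n) + norm (cayley A))"
    by (simp add: norm_triangle_ineq)
  then show ?thesis
    using norm_orthogonal_matrix[OF orthogonal_matrix_id, where 'n='n]
      norm_orthogonal_matrix[OF orthogonal_matrix_cayley[OF assms]]
    by simp
qed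

lemma has_vector_derivative_cayley:
  fixes A :: "real^'n^'n"
  assumes "transpose A = - A"
  shows "((\<lambda>s. cayley ((s / 2) *\<^sub>R A)) has_vector_derivative A) (at 0)"
proof -
  define M where "M s = matrix_inv (mat 1 - (s / 2) *\<^sub>R A)" for s
  have skew: "transpose ((s / 2) *\<^sub>R A) = - ((s / 2) *\<^sub>R A)" for s
    using assms by (simp add: transpose_scalar)
  have Q: "cayley ((s / 2) *\<^sub>R A) = mat 1 + s *\<^sub>R (A ** M s)" for s
    using cayley_eq[OF skew] by (simp add: M_def scalar_matrix_assoc[symmetric])
  have M: "M s = mat 1 + (s / 2) *\<^sub>R (A ** M s)" for s
    using matrix_inv_id_minus_eq[OF skew] by (simp add: M_def scalar_matrix_assoc[symmetric])
  have bound: "norm (M s) \<le> sqrt CARD('n)" for s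
    unfolding M_def by (rule norm_matrix_inv_id_minus_skew[OF skew])
  obtain K where "K > 0" and K: "\<And>a b. norm ((a::real^'n^'n) ** (b::real^'n^'n)) \<le> norm a * norm b * K"
    using bounded_bilinear.pos_bounded[OF bounded_bilinear_matrix_mult] by blast
  have M_near_1: "norm (M s - mat 1) \<le> \<bar>s\<bar> * (norm A * sqrt CARD('n) * K)" for s
  proof -
    have "norm (M s - mat 1) = \<bar>s\<bar> / 2 * norm (A ** M s)"
      by (metis M add_diff_cancel_left' norm_scaleR abs_divide abs_numeral)
    also have "\<dots> \<le> \<bar>s\<bar> * norm (A ** M s)"
      by (simp add: mult_right_mono)
    also have "\<dots> \<le> \<bar>s\<bar> * (norm A * norm (M s) * K)"
      by (rule mult_left_mono[OF K]) simp
    also have "\<dots> \<le> \<bar>s\<bar> * (norm A * sqrt CARD('n) * K)"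
      using bound[of s] \<open>K > 0\<close> by (simp add: mult_left_mono mult_right_mono)
    finally show ?thesis .
  qed
  have "((\<lambda>s. M s - mat 1) \<longlongrightarrow> 0) (at 0)"
  proof (rule Lim_null_comparison)
    show "\<forall>\<^sub>F s in at 0. norm (M s - mat 1) \<le> \<bar>s\<bar> * (norm A * sqrt CARD('n) * K)"
      using M_near_1 by (rule always_eventually[OF allI])
    show "((\<lambda>s. \<bar>s\<bar> * (norm A * sqrt CARD('n) * K)) \<longlongrightarrow> 0) (at 0)"
      by (auto intro!: tendsto_eq_intros)
  qed
  then have "((\<lambda>s. A ** M s) \<longlongrightarrow> A ** mat 1) (at 0)"
    by (intro bounded_bilinear.tendsto[OF bounded_bilinear_matrix_mult tendsto_const])
      (simp add: LIM_zero_iff)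
  then show ?thesis
    unfolding Q by (intro has_vector_derivative_scaleR_at_0) simp
qed

section \<open>Block structure\<close>

lemma idx_pos_less: "idx_pos (i::'a::{finite,linorder}) < CARD('a)"
  unfolding idx_pos_def by (rule psubset_card_mono) auto

lemma idx_pos_strict_mono: "strict_mono (idx_pos :: 'a::{finite,linorder} \<Rightarrow> nat)"
  unfolding strict_mono_def idx_pos_def by (auto intro!: psubset_card_mono)

lemma bij_betw_idx_pos: "bij_betw (idx_pos :: 'a::{finite,linorder} \<Rightarrow> nat) UNIV {..<CARD('a)}"
proof -
  have inj: "inj (idx_pos :: 'a \<Rightarrow> nat)"
    using idx_pos_strict_mono strict_mono_imp_inj_on by blast
  have "idx_pos ` (UNIV::'a set) = {..<CARD('a)}"
    by (rule card_subset_eq) (use idx_pos_less card_image[OF inj] in auto)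
  with inj show ?thesis
    by (simp add: bij_betw_def)
qed

lemma sum_idx_pos: "(\<Sum>k::'a::{finite,linorder}\<in>UNIV. f (idx_pos k)) = (\<Sum>m<CARD('a). f m)"
  using sum.reindex_bij_betw[OF bij_betw_idx_pos, of f] by simp

lemma mono_on_bnd:
  assumes "1 \<le> d" "0 < ns 1" "\<forall>k. 1 \<le> k \<and> k < d \<longrightarrow> ns k < ns (Suc k)" "ns d < N"
  shows "mono_on {..Suc d} (bnd N ns d)"
proof (rule mono_onI)
  have step: "bnd N ns d k \<le> bnd N ns d (Suc k)" if "k \<in> {..d}" for k
    using assms that by (cases "k = 0"; cases "k = d") (auto simp: bnd_def less_imp_le)
  show "bnd N ns d r \<le> bnd N ns d s" if "r \<in> {..Suc d}" "s \<in> {..Suc d}" "r \<le> s" for r s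
    by (rule lift_Suc_mono_le_ivl[where N = "{..d}"]) (use step that in auto)
qed

lemma ex1_segment_index:
  fixes f :: "nat \<Rightarrow> 'a::linorder"
  assumes mono: "mono_on {..n} f" and "f 0 \<le> p" "p < f n"
  shows "\<exists>!m. m < n \<and> f m \<le> p \<and> p < f (Suc m)"
proof (rule ex_ex1I)
  define j where "j = (LEAST j. p < f j)"
  have "p < f j" "j \<le> n"
    unfolding j_def using \<open>p < f n\<close> by (auto intro: LeastI Least_le)
  moreover have "j \<noteq> 0"
    using \<open>p < f j\<close> \<open>f 0 \<le> p\<close> by (metis not_less)
  moreover have "f (j - 1) \<le> p"
    using \<open>j \<noteq> 0\<close> not_less_Least[of "j - 1" "\<lambda>j. p < f j"] unfolding j_def by simp
  ultimately show "\<exists>m. m < n \<and> f m \<le> p \<and> p < f (Suc m)"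
    by (intro exI[of _ "j - 1"]) auto
next
  have "\<not> (m < m' \<and> f m' \<le> p \<and> p < f (Suc m))" if "m' < n" for m m'
    using mono_onD[OF mono, of "Suc m" m'] that by auto
  then show "m = m'"
    if "m < n \<and> f m \<le> p \<and> p < f (Suc m)" "m' < n \<and> f m' \<le> p \<and> p < f (Suc m')" for m m'
    using that by (metis linorder_neqE_nat)
qed

lemma sum_if_unique_one_minus_one:
  assumes "finite S" "m0 \<in> S" "\<And>m. m \<in> S \<Longrightarrow> P m \<longleftrightarrow> m = m0"
  shows "(\<Sum>m\<in>S. if P m then 1 else -1 :: real) = 2 - real (card S)"
proof -
  have "(\<Sum>m\<in>S. if P m then 1 else -1 :: real) = 1 + (\<Sum>m\<in>S - {m0}. -1)"
    using assms by (simp add: sum.remove[of S m0])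
  moreover have "0 < card S"
    using assms by (auto simp: card_gt_0_iff)
  ultimately show ?thesis
    using assms by (simp add: card_Diff_singleton of_nat_diff Suc_leI)
qed

definition diag_mat :: "('n \<Rightarrow> 'a::zero) \<Rightarrow> 'a^'n^'n" where
  "diag_mat a = (\<chi> i j. if i = j then a i else 0)"

definition block_proj ::
    "(nat \<Rightarrow> nat) \<Rightarrow> nat \<Rightarrow> nat \<Rightarrow> real^('n::{finite,linorder})^('n::{finite,linorder})" where
  "block_proj ns d k = diag_mat (\<lambda>i. if in_block ns d k i then 1 else 0)"

lemma diag_mat_mult_left: "(diag_mat a ** L) $ i $ j = a i * (L $ i $ j :: 'a::semiring_1)"
proof -
  have "(\<Sum>k\<in>UNIV. (if i = k then a i else 0) * L $ k $ j) = (\<Sum>k\<in>UNIV. if k = i then a i * L $ i $ j else 0)"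
    by (rule sum.cong) auto
  then show ?thesis
    by (simp add: matrix_matrix_mult_def diag_mat_def)
qed

lemma diag_mat_mult_right: "(L ** diag_mat a) $ i $ j = (L $ i $ j :: 'a::semiring_1) * a j"
proof -
  have "(\<Sum>k\<in>UNIV. L $ i $ k * (if k = j then a k else 0)) = (\<Sum>k\<in>UNIV. if k = j then L $ i $ j * a j else 0)"
    by (rule sum.cong) auto
  then show ?thesis
    by (simp add: matrix_matrix_mult_def diag_mat_def)
qed

lemma diag_mat_mult: "diag_mat a ** diag_mat b = diag_mat (\<lambda>i. a i * (b i :: 'a::semiring_1))"
  by (simp add: vec_eq_iff diag_mat_mult_left) (simp add: diag_mat_def)

lemma transpose_diag_mat: "transpose (diag_mat a) = diag_mat a"
  by (simp add: vec_eq_iff transpose_def diag_mat_def)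

lemma Jmat_eq_diag_mat: "Jmat ns d k = diag_mat (\<lambda>i. if in_block ns d k i then 1 else -1)"
  by (simp add: Jmat_def diag_mat_def)

lemma Jmat_mult_self: "Jmat ns d k ** Jmat ns d k = mat 1"
  by (simp add: Jmat_eq_diag_mat diag_mat_mult) (simp add: diag_mat_def mat_def vec_eq_iff)

lemma transpose_Jmat: "transpose (Jmat ns d k) = Jmat ns d k"
  by (simp add: Jmat_eq_diag_mat transpose_diag_mat)

lemma Jmat_eq_block_proj: "Jmat ns d k = 2 *\<^sub>R block_proj ns d k - mat 1"
  by (simp add: Jmat_def block_proj_def diag_mat_def mat_def vec_eq_iff)

lemma block_proj_sandwich:
  "(block_proj ns d k ** L ** block_proj ns d k) $ i $ j =
     (if in_block ns d k i \<and> in_block ns d k j then L $ i $ j else 0)"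
  by (simp add: block_proj_def diag_mat_mult_left diag_mat_mult_right)

lemma sum_Jtup:
  assumes mono: "mono_on {..Suc d} (bnd CARD('n) ns d)" and card_k: "CARD('k) = Suc d"
  shows "(\<Sum>k\<in>UNIV. (Jtup ns d :: real^('n::{finite,linorder})^('n::{finite,linorder})^('k::{finite,linorder})) $ k)
    = mat (1 - real d)" (is "?S = _")
proof -
  have "(\<Sum>m<Suc d. Jmat ns d (Suc m) $ i $ i) = 1 - real d" for i :: 'n
  proof -
    obtain m0 where m0: "m0 < Suc d" "\<And>m. m < Suc d \<Longrightarrow> in_block ns d (Suc m) i \<longleftrightarrow> m = m0"
      using ex1_segment_index[OF mono, of "idx_pos i"] idx_pos_less[of i]
      by (auto simp: in_block_def bnd_def)
    then show ?thesis
      by (simp add: Jmat_def sum_if_unique_one_minus_one[of _ m0])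
  qed
  then have "?S $ i $ j = mat (1 - real d) $ i $ j" for i j
    using sum_idx_pos[where 'a='k, of "\<lambda>m. Jmat ns d (Suc m) $ i $ j"] card_k
    by (auto simp: sum_component Jtup_def mat_def Jmat_def)
  then show ?thesis
    by (simp add: vec_eq_iff)
qed

section \<open>Tangent vectors of the flag manifold\<close>

lemma flag_manifoldI: "orthogonal_matrix W \<Longrightarrow> conj_tup W (Jtup ns d) \<in> flag_manifold ns d"
  unfolding flag_manifold_def by blast

lemma flag_manifold_square:
  assumes "x \<in> flag_manifold ns d"
  shows "x $ k ** x $ k = mat 1"
proof -
  obtain W where W: "orthogonal_matrix W" and x: "x = conj_tup W (Jtup ns d)"
    using assms unfolding flag_manifold_def by blast
  have "x $ k ** x $ k = W ** (Jtup ns d $ k ** (transpose W ** W) ** Jtup ns d $ k) ** transpose W"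
    by (simp add: x conj_tup_def matrix_mul_assoc)
  then show ?thesis
    using W by (simp add: orthogonal_matrix_def Jtup_def Jmat_mult_self)
qed

lemma flag_manifold_sum:
  assumes "mono_on {..Suc d} (bnd CARD('n) ns d)" "CARD('k) = Suc d"
    and "(x :: real^('n::{finite,linorder})^('n::{finite,linorder})^('k::{finite,linorder}))
      \<in> flag_manifold ns d"
  shows "(\<Sum>k\<in>UNIV. x $ k) = mat (1 - real d)"
proof -
  obtain W where W: "orthogonal_matrix W" and x: "x = conj_tup W (Jtup ns d)"
    using assms unfolding flag_manifold_def by blast
  have "(\<Sum>k\<in>UNIV. x $ k) = W ** (\<Sum>k::'k\<in>UNIV. Jtup ns d $ k) ** transpose W"
    by (simp add: x conj_tup_def matrix_mult_sum matrix_sum_mult matrix_mul_assoc)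
  also have "\<dots> = (1 - real d) *\<^sub>R (W ** transpose W)"
    using sum_Jtup[OF assms(1,2)]
    by (simp add: mat_eq_scaleR[of "1 - real d"] matrix_scalar_ac scalar_matrix_assoc[symmetric])
  finally show ?thesis
    using W by (simp add: orthogonal_matrix_def mat_eq_scaleR[of "1 - real d"])
qed

lemma tangent_space_flag_manifold:
  assumes "mono_on {..Suc d} (bnd CARD('n) ns d)" "CARD('k) = Suc d"
    and "u \<in> tangent_space
      (flag_manifold ns d :: (real^('n::{finite,linorder})^('n::{finite,linorder})^('k::{finite,linorder})) set) c"
  shows "c $ k ** u $ k + u $ k ** c $ k = 0" and "(\<Sum>k\<in>UNIV. u $ k) = 0"
proof -
  obtain \<gamma> where \<gamma>0: "\<gamma> 0 = c" and \<gamma>: "\<And>s. \<gamma> s \<in> flag_manifold ns d"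
    and d\<gamma>: "(\<gamma> has_vector_derivative u) (at 0)"
    using assms(3) unfolding tangent_space_def by blast
  have d\<gamma>k: "((\<lambda>s. \<gamma> s $ k) has_vector_derivative u $ k) (at 0)" for k
    by (rule bounded_linear.has_vector_derivative[OF bounded_linear_vec_nth d\<gamma>])
  show "c $ k ** u $ k + u $ k ** c $ k = 0"
    using bounded_bilinear.has_vector_derivative[OF bounded_bilinear_matrix_mult d\<gamma>k[of k] d\<gamma>k[of k]]
    unfolding \<gamma>0 by (rule has_vector_derivative_const_eq_0) (rule flag_manifold_square[OF \<gamma>])
  show "(\<Sum>k\<in>UNIV. u $ k) = 0"
    using has_vector_derivative_sum[OF d\<gamma>k]
    by (rule has_vector_derivative_const_eq_0) (rule flag_manifold_sum[OF assms(1,2) \<gamma>])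
qed

lemma tangent_space_flag_manifold_pullback:
  assumes "mono_on {..Suc d} (bnd CARD('n) ns d)" "CARD('k) = Suc d" "orthogonal_matrix W"
    and "u \<in> tangent_space
      (flag_manifold ns d :: (real^('n::{finite,linorder})^('n::{finite,linorder})^('k::{finite,linorder})) set)
      (conj_tup W (Jtup ns d))"
  defines "J \<equiv> Jtup ns d :: real^('n::{finite,linorder})^('n::{finite,linorder})^('k::{finite,linorder})"
    and "U \<equiv> conj_tup (transpose W) u"
  shows "J $ k ** U $ k + U $ k ** J $ k = 0" and "(\<Sum>k\<in>UNIV. U $ k) = 0"
proof -
  have WW: "transpose W ** W = mat 1" "W ** transpose W = mat 1"
    using assms(3) by (auto simp: orthogonal_matrix_def)
  have "J $ k ** U $ k + U $ k ** J $ k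
      = transpose W ** (conj_tup W J $ k ** u $ k + u $ k ** conj_tup W J $ k) ** W"
    by (simp add: U_def conj_tup_def matrix_add_ldistrib matrix_add_rdistrib matrix_mul_assoc)
       (simp add: matrix_mul_assoc[symmetric] WW)
  then show "J $ k ** U $ k + U $ k ** J $ k = 0"
    using tangent_space_flag_manifold(1)[OF assms(1,2,4)] by (simp add: J_def)
  show "(\<Sum>k\<in>UNIV. U $ k) = 0"
    using tangent_space_flag_manifold(2)[OF assms(1,2,4)]
    by (simp add: U_def conj_tup_def matrix_mult_sum[symmetric] matrix_sum_mult[symmetric])
qed

lemma commutator_in_tangent_space_flag_manifold:
  fixes A :: "real^('n::{finite,linorder})^('n::{finite,linorder})" and ns :: "nat \<Rightarrow> nat" and d :: nat
  assumes W: "orthogonal_matrix W" and skew: "transpose A = - A"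
  defines "J \<equiv> Jtup ns d :: real^('n::{finite,linorder})^('n::{finite,linorder})^('k::{finite,linorder})"
  shows "conj_tup W (\<chi> k. A ** J $ k - J $ k ** A) \<in> tangent_space (flag_manifold ns d) (conj_tup W J)"
proof -
  define Q where "Q s = cayley ((s / 2) *\<^sub>R A)" for s
  define G where "G W1 W2 = (\<chi> k. (W ** W1) ** J $ k ** transpose (W ** W2))" for W1 W2
  have "bounded_bilinear G"
    unfolding bilinear_conv_bounded_bilinear[symmetric] bilinear_def G_def
    by (auto intro!: linearI simp: vec_eq_iff matrix_add_ldistrib matrix_add_rdistrib transpose_add
        scalar_matrix_assoc matrix_scalar_ac transpose_scalar matrix_transpose_mul matrix_mul_assoc)
  from bounded_bilinear.has_vector_derivative[OF this]
  have "((\<lambda>s. G (Q s) (Q s)) has_vector_derivative G (Q 0) A + G A (Q 0)) (at 0)"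
    using has_vector_derivative_cayley[OF skew] unfolding Q_def by blast
  moreover have Q0: "Q 0 = mat 1"
    using cayley_eq[of 0] transpose_mat[of 0] by (simp add: Q_def)
  moreover have "G (mat 1) A + G A (mat 1) = conj_tup W (\<chi> k. A ** J $ k - J $ k ** A)"
    by (simp add: G_def conj_tup_def vec_eq_iff matrix_transpose_mul skew matrix_mult_neg
        matrix_neg_mult matrix_diff_ldistrib matrix_diff_rdistrib matrix_mul_assoc)
  moreover have "G (Q s) (Q s) \<in> flag_manifold ns d" for s
    using orthogonal_matrix_mul[OF W orthogonal_matrix_cayley] skew
    by (auto simp: G_def Q_def J_def conj_tup_def[symmetric] transpose_scalar intro!: flag_manifoldI)
  ultimately show ?thesis
    unfolding tangent_space_def by (intro CollectI exI[of _ "\<lambda>s. G (Q s) (Q s)"]) (simp add: G_def conj_tup_def)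
qed

section \<open>Normal components\<close>

lemma inner_anticommutator_square_eq_0:
  fixes L J U :: "real^'n^'n"
  assumes "transpose L = - L" "transpose J = J" "J ** U + U ** J = 0"
  shows "inner (L ** L ** J + J ** L ** L) U = 0"
proof -
  have "inner (L ** L ** J + J ** L ** L) U = trace (J ** (L ** L ** U)) + trace (L ** L ** (J ** U))"
    using assms(1,2)
    by (simp add: inner_matrix_eq_trace transpose_add matrix_transpose_mul matrix_neg_mult
        matrix_mult_neg matrix_add_rdistrib trace_add matrix_mul_assoc add.commute)
  also have "trace (J ** (L ** L ** U)) = trace (L ** L ** (U ** J))"
    using trace_mul_sym[of J "L ** L ** U"] by (simp add: matrix_mul_assoc)
  also have "trace (L ** L ** (U ** J)) + trace (L ** L ** (J ** U)) = trace (L ** L ** (J ** U + U ** J))"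
    by (simp add: matrix_add_ldistrib trace_add add.commute)
  finally show ?thesis
    using assms(3) by (simp add: trace_0[simplified])
qed

lemma eq_add_if_double_diff_sum_eq_0:
  "2 *\<^sub>R x - u + (2 *\<^sub>R y - u) = 0 \<Longrightarrow> u = x + (y::'a::real_vector)"
proof -
  assume "2 *\<^sub>R x - u + (2 *\<^sub>R y - u) = 0"
  moreover have "2 *\<^sub>R x - u + (2 *\<^sub>R y - u) = 2 *\<^sub>R (x + y - u)"
    by (simp add: algebra_simps scaleR_2)
  ultimately show ?thesis
    by simp
qed

lemma inner_sandwich_eq_neg_trace:
  fixes L J U P :: "real^'n^'n"
  assumes skew: "transpose L = - L" and sym: "transpose J = J" and JP: "J = 2 *\<^sub>R P - mat 1"
    and PLP: "P ** L ** P = 0" and anticomm: "J ** U + U ** J = 0"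
  shows "inner (L ** J ** L) U = - trace (L ** L ** U)"
proof -
  have "2 *\<^sub>R (P ** U) - U + (2 *\<^sub>R (U ** P) - U) = 0"
    using anticomm by (simp add: JP matrix_diff_ldistrib matrix_diff_rdistrib matrix_scalar_ac
        scalar_matrix_assoc[symmetric])
  then have U: "U = P ** U + U ** P"
    by (rule eq_add_if_double_diff_sum_eq_0)
  have "trace (L ** P ** L ** U) = trace (L ** (P ** L ** P) ** U) + trace ((P ** L ** P) ** L ** U)"
    using trace_mul_sym[of "L ** P ** L ** U" P]
    by (subst U) (simp add: matrix_add_ldistrib trace_add matrix_mul_assoc)
  then have "trace (L ** P ** L ** U) = 0"
    by (simp add: PLP trace_0[simplified])
  moreover have "inner (L ** J ** L) U = trace (L ** J ** L ** U)"
    using skew sym by (simp add: inner_matrix_eq_trace matrix_transpose_mul matrix_neg_mult matrix_mult_neg matrix_mul_assoc)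
  moreover have "L ** J ** L ** U = 2 *\<^sub>R (L ** P ** L ** U) - L ** L ** U"
    by (simp add: JP matrix_diff_ldistrib matrix_diff_rdistrib matrix_scalar_ac scalar_matrix_assoc[symmetric])
  ultimately show ?thesis
    by (simp add: trace_sub trace_scaleR)
qed

lemma orth_proj_tangent_flag_manifold_anticommutator:
  fixes L :: "real^('n::{finite,linorder})^('n::{finite,linorder})"
  assumes "mono_on {..Suc d} (bnd CARD('n) ns d)" "CARD('k) = Suc d" "orthogonal_matrix W"
    and "transpose L = - L"
  defines "J \<equiv> Jtup ns d :: real^('n::{finite,linorder})^('n::{finite,linorder})^('k::{finite,linorder})"
  shows "orth_proj (tangent_space (flag_manifold ns d) (conj_tup W J))
    (conj_tup W (\<chi> k. L ** L ** J $ k + J $ k ** L ** L)) = 0"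
proof (rule orth_proj_eq_0)
  show "0 \<in> tangent_space (flag_manifold ns d) (conj_tup W J)"
    using assms(3) by (simp add: J_def flag_manifoldI zero_in_tangent_space)
  fix u assume "u \<in> tangent_space (flag_manifold ns d) (conj_tup W J)"
  from tangent_space_flag_manifold_pullback(1)[OF assms(1-3) this[unfolded J_def]]
  show "inner (conj_tup W (\<chi> k. L ** L ** J $ k + J $ k ** L ** L)) u = 0"
    using assms(4) by (simp add: inner_conj_tup_sum inner_anticommutator_square_eq_0 J_def Jtup_def transpose_Jmat)
qed

lemma orth_proj_tangent_flag_manifold_sandwich:
  fixes L :: "real^('n::{finite,linorder})^('n::{finite,linorder})"
  assumes "mono_on {..Suc d} (bnd CARD('n) ns d)" "CARD('k) = Suc d" "orthogonal_matrix W"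
    and "transpose L = - L"
    and "\<And>k::'k::{finite,linorder}. block_proj ns d (idx_pos k + 1) ** L ** block_proj ns d (idx_pos k + 1) = 0"
  defines "J \<equiv> Jtup ns d :: real^('n::{finite,linorder})^('n::{finite,linorder})^('k::{finite,linorder})"
  shows "orth_proj (tangent_space (flag_manifold ns d) (conj_tup W J))
    (conj_tup W (\<chi> k. L ** J $ k ** L)) = 0"
proof (rule orth_proj_eq_0)
  show "0 \<in> tangent_space (flag_manifold ns d) (conj_tup W J)"
    using assms(3) by (simp add: J_def flag_manifoldI zero_in_tangent_space)
  fix u assume u: "u \<in> tangent_space (flag_manifold ns d) (conj_tup W J)"
  define U where "U = conj_tup (transpose W) u"
  note tangent = tangent_space_flag_manifold_pullback[OF assms(1-3) u[unfolded J_def], folded J_def U_def]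
  have sym: "transpose (J $ k) = J $ k" for k
    by (simp add: J_def Jtup_def transpose_Jmat)
  have JP: "J $ k = 2 *\<^sub>R block_proj ns d (idx_pos k + 1) - mat 1" for k
    by (simp add: J_def Jtup_def Jmat_eq_block_proj)
  have "inner (conj_tup W (\<chi> k. L ** J $ k ** L)) u = (\<Sum>k\<in>UNIV. - trace (L ** L ** U $ k))"
    unfolding inner_conj_tup_sum U_def[symmetric]
    using inner_sandwich_eq_neg_trace[OF assms(4) sym JP assms(5) tangent(1)] by simp
  also have "\<dots> = - trace (L ** L ** (\<Sum>k\<in>UNIV. U $ k))"
    by (simp add: trace_sum sum_negf matrix_mult_sum)
  finally show "inner (conj_tup W (\<chi> k. L ** J $ k ** L)) u = 0"
    by (simp add: tangent(2) trace_0[simplified])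
qed

theorem lemma4p5:
  fixes d :: nat and ns :: "nat \<Rightarrow> nat"
    and V V' L' :: "real \<Rightarrow> real^('n::{finite,linorder})^('n::{finite,linorder})"
    and t :: real
  assumes d: "1 \<le> d"
    and ns_pos: "0 < ns 1"
    and ns_mono: "\<forall>k. 1 \<le> k \<and> k < d \<longrightarrow> ns k < ns (Suc k)"
    and ns_lt: "ns d < CARD('n)"
    and card_k: "CARD('k::{finite,linorder}) = Suc d"
    and orth: "\<forall>s. orthogonal_matrix (V s)"
    and dV: "\<forall>s. (V has_vector_derivative V' s) (at s)"
    and dL: "\<forall>s. ((\<lambda>r. transpose (V r) ** V' r) has_vector_derivative L' s) (at s)"
    and diag0: "\<forall>s k i j. 1 \<le> k \<and> k \<le> Suc d \<and> in_block ns d k i \<and> in_block ns d k j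
                  \<longrightarrow> (transpose (V s) ** V' s) $ i $ j = 0"
  shows
    "let \<Lambda> = transpose (V t) ** V' t;
         J = (Jtup ns d :: real^('n::{finite,linorder})^('n::{finite,linorder})^('k::{finite,linorder}));
         c = conj_tup (V t) J;
         TS = tangent_space (flag_manifold ns d :: (real^('n::{finite,linorder})^('n::{finite,linorder})^('k::{finite,linorder})) set) c;
         T1 = conj_tup (V t) (\<chi> k. L' t ** (J $ k) - (J $ k) ** L' t);
         T2 = conj_tup (V t) (\<chi> k. \<Lambda> ** \<Lambda> ** (J $ k) + (J $ k) ** \<Lambda> ** \<Lambda>);
         T3 = conj_tup (V t) (\<chi> k. \<Lambda> ** (J $ k) ** \<Lambda>)
     in T1 \<in> TS \<and> orth_proj TS T2 = 0 \<and> orth_proj TS T3 = 0"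
proof -
  define \<Lambda> where "\<Lambda> = transpose (V t) ** V' t"
  have W: "orthogonal_matrix (V t)"
    using orth by blast
  have mono: "mono_on {..Suc d} (bnd CARD('n) ns d)"
    using mono_on_bnd[OF d ns_pos ns_mono ns_lt] .
  have skew: "transpose (transpose (V s) ** V' s) = - (transpose (V s) ** V' s)" for s
    using skew_velocity_of_orthogonal_curve orth dV by blast
  have "transpose (L' t) = - L' t"
    using skew_derivative_of_skew_curve[of "\<lambda>r. transpose (V r) ** V' r", OF skew] dL by blast
  note T1 = commutator_in_tangent_space_flag_manifold[OF W this, where 'k='k]
  have blocks: "block_proj ns d (idx_pos k + 1) ** \<Lambda> ** block_proj ns d (idx_pos k + 1) = 0" for k :: 'k
    using diag0[THEN spec[of _ t], THEN spec[of _ "Suc (idx_pos k)"]] idx_pos_less[of k] card_k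
    by (auto simp: vec_eq_iff block_proj_sandwich \<Lambda>_def)
  show ?thesis
    using T1 orth_proj_tangent_flag_manifold_anticommutator[OF mono card_k W skew[of t, folded \<Lambda>_def]]
      orth_proj_tangent_flag_manifold_sandwich[OF mono card_k W skew[of t, folded \<Lambda>_def] blocks]
    unfolding Let_def \<Lambda>_def by simp
qed

end
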